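(* The following single-statistic generating functions hold over $S_n(123,132)$: $$\sum_{n\ge0}\sum_{\pi\in S_n(123,132)}x^np^{\operatorname{asc}(\pi)}=\frac{1-x}{1-2x+x^2-px^2},\qquad \sum_{n\ge0}\sum_{\pi\in S_n(123,132)}x^nq^{\operatorname{des}(\pi)}=\frac{1+x-2qx+x^2-2qx^2+q^2x^2}{1-2qx-qx^2+q^2x^2},$$ $$\sum_{n\ge0}\sum_{\pi\in S_n(123,132)}x^ny^{\operatorname{MNA}(\pi)}=\frac{1-x}{1-2x+x^2-x^2y},\qquad \sum_{n\ge0}\sum_{\pi\in S_n(123,132)}x^nz^{\operatorname{MND}(\pi)}=\frac{1+x+x^2-2x^2z-x^3z}{1-3x^2z-2x^3z}.$$
   Context: For $n\ge 0$, $S_n$ denotes the set of permutations $\pi=\pi_1\pi_2\cdots\pi_n$ of $[n]=\{1,\dots,n\}$ ($S_0$ consists of the empty permutation, for which all statistics below are $0$). $S_n(123,132)$ is the set of $\pi\in S_n$ containing no subsequence order-isomorphic to $123$ or to $132$. $\operatorname{asc}(\pi)$ (resp. $\operatorname{des}(\pi)$) is the number of $i\in[n-1]$ with $\pi_i<\pi_{i+1}$ (resp. $\pi_i>\pi_{i+1}$). $\operatorname{MNA}(\pi)$ is the maximum size of a set $I\subseteq[n-1]$ such that $\pi_i<\pi_{i+1}$ for all $i\in I$ and $|i-j|\ge 2$ for distinct $i,j\in I$; $\operatorname{MND}(\pi)$ is defined analogously with $\pi_i>\pi_{i+1}$. *)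

theory Defs
  imports "HOL-Computational_Algebra.Formal_Power_Series"
begin

text \<open>A permutation of [n] is represented by its one-line notation, a list of length n.
  Positions are 0-indexed in the list, which does not affect any statistic.\<close>

definition perms :: "nat \<Rightarrow> nat list set" where
  "perms n = {xs. distinct xs \<and> set xs = {1..n}}"

definition contains123 :: "nat list \<Rightarrow> bool" where
  "contains123 xs \<longleftrightarrow> (\<exists>i j k. i < j \<and> j < k \<and> k < length xs \<and>
       xs ! i < xs ! j \<and> xs ! j < xs ! k)"

definition contains132 :: "nat list \<Rightarrow> bool" where
  "contains132 xs \<longleftrightarrow> (\<exists>i j k. i < j \<and> j < k \<and> k < length xs \<and>
       xs ! i < xs ! k \<and> xs ! k < xs ! j)"

definition av123_132 :: "nat \<Rightarrow> nat list set" where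
  "av123_132 n = {xs \<in> perms n. \<not> contains123 xs \<and> \<not> contains132 xs}"

definition asc_set :: "nat list \<Rightarrow> nat set" where
  "asc_set xs = {i. Suc i < length xs \<and> xs ! i < xs ! Suc i}"

definition des_set :: "nat list \<Rightarrow> nat set" where
  "des_set xs = {i. Suc i < length xs \<and> xs ! i > xs ! Suc i}"

definition asc :: "nat list \<Rightarrow> nat" where
  "asc xs = card (asc_set xs)"

definition des :: "nat list \<Rightarrow> nat" where
  "des xs = card (des_set xs)"

definition nonadj :: "nat set \<Rightarrow> bool" where
  "nonadj I \<longleftrightarrow> (\<forall>i\<in>I. \<forall>j\<in>I. i \<noteq> j \<longrightarrow> i + 2 \<le> j \<or> j + 2 \<le> i)"

definition MNA :: "nat list \<Rightarrow> nat" where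
  "MNA xs = Max {card I | I. I \<subseteq> asc_set xs \<and> nonadj I}"

definition MND :: "nat list \<Rightarrow> nat" where
  "MND xs = Max {card I | I. I \<subseteq> des_set xs \<and> nonadj I}"

text \<open>Generating function of a statistic over S_n(123,132), with the statistic variable
  specialised to a field element t.\<close>
definition gf :: "(nat list \<Rightarrow> nat) \<Rightarrow> 'a::field \<Rightarrow> 'a fps" where
  "gf st t = Abs_fps (\<lambda>n. \<Sum>\<pi>\<in>av123_132 n. t ^ st \<pi>)"

end

theory Submission
  imports Defs
begin

(* If pi is in S_{n+1}(123,132), at most one entry after pi_1 exceeds pi_1, since two larger
   later entries form a 123 or a 132 with it; so pi_1 is n or n + 1. Conversely, putting n or
   n + 1 in front of an order-isomorphic copy of any tau in S_n(123,132) creates no pattern.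
   Splitting each coefficient of a generating function by the first entry therefore gives two
   coupled linear recurrences; eliminating the auxiliary sequence leaves a linear recurrence
   of order at most three, which together with the coefficients for n <= 3 determines the
   rational function. A 123-avoider has no two adjacent ascents, so MNA = asc there. *)

section \<open>Patterns of length three\<close>

definition has_triple :: "(nat \<Rightarrow> nat \<Rightarrow> nat \<Rightarrow> bool) \<Rightarrow> nat list \<Rightarrow> bool" where
  "has_triple P xs \<longleftrightarrow>
     (\<exists>i j k. i < j \<and> j < k \<and> k < length xs \<and> P (xs ! i) (xs ! j) (xs ! k))"

lemma contains123_eq_has_triple: "contains123 = has_triple (\<lambda>x y z. x < y \<and> y < z)"
  by (simp add: fun_eq_iff contains123_def has_triple_def)

lemma contains132_eq_has_triple: "contains132 = has_triple (\<lambda>x y z. x < z \<and> z < y)"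
  by (simp add: fun_eq_iff contains132_def has_triple_def)

lemma has_triple_Cons:
  "has_triple P (a # xs) \<longleftrightarrow>
     has_triple P xs \<or> (\<exists>j k. j < k \<and> k < length xs \<and> P a (xs ! j) (xs ! k))"
proof
  assume "has_triple P (a # xs)"
  then obtain i j k where ijk: "i < j" "j < k" "k < Suc (length xs)"
    "P ((a # xs) ! i) ((a # xs) ! j) ((a # xs) ! k)"
    unfolding has_triple_def by auto
  then obtain j' k' where "j = Suc j'" "k = Suc k'"
    by (metis less_nat_zero_code not0_implies_Suc order.strict_trans)
  with ijk show "has_triple P xs \<or> (\<exists>j k. j < k \<and> k < length xs \<and> P a (xs ! j) (xs ! k))"
    unfolding has_triple_def by (cases i) auto
next
  assume "has_triple P xs \<or> (\<exists>j k. j < k \<and> k < length xs \<and> P a (xs ! j) (xs ! k))"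
  then show "has_triple P (a # xs)"
    unfolding has_triple_def by (metis Suc_mono length_Cons nth_Cons_0 nth_Cons_Suc zero_less_Suc)
qed

lemma has_triple_map:
  "has_triple P (map f xs) \<longleftrightarrow> has_triple (\<lambda>x y z. P (f x) (f y) (f z)) xs"
  unfolding has_triple_def by (intro iff_exI conj_cong refl) auto

lemma has_triple_cong:
  assumes "\<And>x y z. x \<in> set xs \<Longrightarrow> y \<in> set xs \<Longrightarrow> z \<in> set xs \<Longrightarrow> P x y z \<longleftrightarrow> Q x y z"
  shows "has_triple P xs \<longleftrightarrow> has_triple Q xs"
  unfolding has_triple_def using assms by (meson nth_mem order.strict_trans)

lemma contains123_map:
  fixes f :: "nat \<Rightarrow> nat"
  assumes "strict_mono_on (set xs) f"
  shows "contains123 (map f xs) \<longleftrightarrow> contains123 xs"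
  unfolding contains123_eq_has_triple has_triple_map
  by (rule has_triple_cong) (simp add: strict_mono_on_less[OF assms])

lemma contains132_map:
  fixes f :: "nat \<Rightarrow> nat"
  assumes "strict_mono_on (set xs) f"
  shows "contains132 (map f xs) \<longleftrightarrow> contains132 xs"
  unfolding contains132_eq_has_triple has_triple_map
  by (rule has_triple_cong) (simp add: strict_mono_on_less[OF assms])

lemma contains123_or_132_Cons:
  assumes "distinct xs"
  shows "contains123 (a # xs) \<or> contains132 (a # xs) \<longleftrightarrow>
    contains123 xs \<or> contains132 xs \<or> (\<exists>x\<in>set xs. \<exists>y\<in>set xs. x \<noteq> y \<and> a < x \<and> a < y)"
proof -
  have "(\<exists>j k. j < k \<and> k < length xs \<and> a < xs ! j \<and> xs ! j < xs ! k) \<or>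
        (\<exists>j k. j < k \<and> k < length xs \<and> a < xs ! k \<and> xs ! k < xs ! j) \<longleftrightarrow>
        (\<exists>x\<in>set xs. \<exists>y\<in>set xs. x \<noteq> y \<and> a < x \<and> a < y)" (is "?L \<longleftrightarrow> ?R")
  proof
    assume ?L
    then show ?R by (metis nth_mem order.strict_trans order_less_irrefl)
  next
    assume ?R
    then obtain j k where "j < length xs" "k < length xs" "j \<noteq> k" "a < xs ! j" "a < xs ! k"
      by (metis in_set_conv_nth)
    with assms show ?L
      by (metis linorder_neqE_nat nth_eq_iff_index_eq)
  qed
  then show ?thesis
    unfolding contains123_eq_has_triple contains132_eq_has_triple has_triple_Cons by auto
qed

section \<open>Decomposition by the first entry\<close>

definition bump :: "nat \<Rightarrow> nat \<Rightarrow> nat" where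
  "bump a v = (if a \<le> v then Suc v else v)"

definition prepend :: "nat \<Rightarrow> nat list \<Rightarrow> nat list" where
  "prepend a \<tau> = a # map (bump a) \<tau>"

lemma strict_mono_on_bump: "strict_mono_on A (bump a)"
  by (rule strict_mono_onI) (simp add: bump_def)

lemma inj_on_bump: "inj_on (bump a) A"
  by (rule strict_mono_on_imp_inj_on[OF strict_mono_on_bump])

lemma bump_neq [simp]: "bump a v \<noteq> a"
  by (simp add: bump_def)

lemma bump_eq_iff: "bump a u = bump a v \<longleftrightarrow> u = v"
  by (auto simp: bump_def)

lemma less_bump_iff: "a < bump a v \<longleftrightarrow> a \<le> v"
  by (simp add: bump_def)

lemma bump_less_iff: "bump a v < a \<longleftrightarrow> v < a"
  by (simp add: bump_def)

lemma bump_image_atLeastAtMost: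
  assumes "1 \<le> a" "a \<le> Suc n"
  shows "bump a ` {1..n} = {1..Suc n} - {a}"
proof (intro equalityI subsetI)
  fix v assume "v \<in> {1..Suc n} - {a}"
  then have "v = bump a (if a < v then v - 1 else v)" "(if a < v then v - 1 else v) \<in> {1..n}"
    using assms by (auto simp: bump_def)
  then show "v \<in> bump a ` {1..n}" by blast
qed (use assms in \<open>auto simp: bump_def\<close>)

lemma inj_prepend: "inj (prepend a)"
  using inj_on_bump by (auto intro!: injI simp: prepend_def inj_map_eq_map)

lemma hd_prepend [simp]: "hd (prepend a \<tau>) = a"
  by (simp add: prepend_def)

lemma tl_prepend [simp]: "tl (prepend a \<tau>) = map (bump a) \<tau>"
  by (simp add: prepend_def)

lemma prepend_neq_Nil [simp]: "prepend a \<tau> \<noteq> []"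
  by (simp add: prepend_def)

lemma perms_Suc: "perms (Suc n) = (\<Union>a\<in>{1..Suc n}. prepend a ` perms n)"
proof (intro equalityI subsetI)
  fix \<pi> assume "\<pi> \<in> perms (Suc n)"
  then obtain a xs where \<pi>: "\<pi> = a # xs" "distinct (a # xs)" "set (a # xs) = {1..Suc n}"
    unfolding perms_def by (cases \<pi>) auto
  define \<tau> where "\<tau> = map (\<lambda>v. if a < v then v - 1 else v) xs"
  have a: "a \<in> {1..Suc n}" using \<pi> by auto
  have xs: "xs = map (bump a) \<tau>"
    using \<pi>(2) by (auto simp: \<tau>_def bump_def intro!: map_idI[symmetric])
  have "bump a ` set \<tau> = bump a ` {1..n}"
    using \<pi> a bump_image_atLeastAtMost[of a n] by (auto simp: xs)
  then have "set \<tau> = {1..n}"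
    using inj_on_bump[of a UNIV] by (simp add: inj_image_eq_iff)
  moreover have "distinct \<tau>" using \<pi>(2) by (simp add: xs distinct_map)
  ultimately show "\<pi> \<in> (\<Union>a\<in>{1..Suc n}. prepend a ` perms n)"
    using a by (auto simp: perms_def prepend_def \<pi> xs)
next
  fix \<pi> assume "\<pi> \<in> (\<Union>a\<in>{1..Suc n}. prepend a ` perms n)"
  then obtain a \<tau> where "a \<in> {1..Suc n}" "distinct \<tau>" "set \<tau> = {1..n}" "\<pi> = prepend a \<tau>"
    unfolding perms_def by auto
  moreover have "a \<notin> bump a ` set \<tau>" by (metis bump_neq imageE)
  ultimately show "\<pi> \<in> perms (Suc n)"
    using bump_image_atLeastAtMost[of a n] inj_on_bump
    by (auto simp: perms_def prepend_def distinct_map)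
qed

lemma avoids_prepend_iff:
  assumes "\<tau> \<in> perms n" "1 \<le> a"
  shows "\<not> contains123 (prepend a \<tau>) \<and> \<not> contains132 (prepend a \<tau>) \<longleftrightarrow>
    \<not> contains123 \<tau> \<and> \<not> contains132 \<tau> \<and> n \<le> a"
proof -
  have "(\<exists>x\<in>set (map (bump a) \<tau>). \<exists>y\<in>set (map (bump a) \<tau>). x \<noteq> y \<and> a < x \<and> a < y) \<longleftrightarrow>
    (\<exists>u\<in>{1..n}. \<exists>v\<in>{1..n}. u \<noteq> v \<and> a \<le> u \<and> a \<le> v)"
    using assms(1) by (auto simp: perms_def less_bump_iff bump_eq_iff)
  also have "\<dots> \<longleftrightarrow> a < n"
  proof
    assume "a < n"
    then show "\<exists>u\<in>{1..n}. \<exists>v\<in>{1..n}. u \<noteq> v \<and> a \<le> u \<and> a \<le> v"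
      using assms(2) by (intro bexI[of _ a] bexI[of _ "Suc a"]) auto
  qed auto
  finally have two_above:
    "(\<exists>x\<in>set (map (bump a) \<tau>). \<exists>y\<in>set (map (bump a) \<tau>). x \<noteq> y \<and> a < x \<and> a < y) \<longleftrightarrow> a < n" .
  have "distinct (map (bump a) \<tau>)"
    using assms(1) inj_on_bump by (simp add: perms_def distinct_map)
  from contains123_or_132_Cons[OF this, of a] two_above
  have "contains123 (prepend a \<tau>) \<or> contains132 (prepend a \<tau>) \<longleftrightarrow>
      contains123 \<tau> \<or> contains132 \<tau> \<or> a < n"
    unfolding prepend_def contains123_map[OF strict_mono_on_bump]
      contains132_map[OF strict_mono_on_bump]
    by simp
  then show ?thesis by auto
qed

lemma av123_132_Suc: "av123_132 (Suc n) = (\<Union>a\<in>{max 1 n..Suc n}. prepend a ` av123_132 n)"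
proof -
  have "av123_132 (Suc n) = (\<Union>a\<in>{1..Suc n}.
      prepend a ` {\<tau> \<in> perms n. \<not> contains123 (prepend a \<tau>) \<and> \<not> contains132 (prepend a \<tau>)})"
    unfolding av123_132_def perms_Suc by blast
  also have "\<dots> = (\<Union>a\<in>{1..Suc n}. prepend a ` {\<tau> \<in> av123_132 n. n \<le> a})"
  proof (intro SUP_cong refl arg_cong[where f = "image _"])
    fix a assume "a \<in> {1..Suc n}"
    then show "{\<tau> \<in> perms n. \<not> contains123 (prepend a \<tau>) \<and> \<not> contains132 (prepend a \<tau>)} =
      {\<tau> \<in> av123_132 n. n \<le> a}"
      using avoids_prepend_iff[of _ n a] unfolding av123_132_def by auto
  qed
  also have "\<dots> = (\<Union>a\<in>{a \<in> {1..Suc n}. n \<le> a}. prepend a ` av123_132 n)"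
    by auto
  also have "{a \<in> {1..Suc n}. n \<le> a} = {max 1 n..Suc n}"
    by auto
  finally show ?thesis .
qed

lemma finite_av123_132: "finite (av123_132 n)"
proof (rule finite_subset)
  show "av123_132 n \<subseteq> {xs. set xs \<subseteq> {1..n} \<and> length xs = n}"
    by (auto simp: av123_132_def perms_def distinct_card[symmetric])
qed (rule finite_lists_length_eq, simp)

lemma av123_132_0: "av123_132 0 = {[]}"
  by (auto simp: av123_132_def perms_def contains123_def contains132_def)

lemma av123_132_1: "av123_132 1 = {[1]}"
  using av123_132_Suc[of 0] by (simp add: av123_132_0 prepend_def)

lemma av123_132_2: "av123_132 2 = {[1, 2], [2, 1]}"
proof -
  have "{max 1 1..Suc 1} = {1, 2::nat}" by auto
  with av123_132_Suc[of 1] have "av123_132 (Suc 1) = (\<Union>a\<in>{1, 2}. prepend a ` av123_132 1)"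
    by (simp only:)
  then show ?thesis unfolding av123_132_1 by (auto simp: prepend_def bump_def numeral_2_eq_2)
qed

lemma av123_132_3: "av123_132 3 = {[2, 1, 3], [2, 3, 1], [3, 1, 2], [3, 2, 1]}"
proof -
  have "{max 1 2..Suc 2} = {2, 3::nat}" by auto
  with av123_132_Suc[of 2] have "av123_132 (Suc 2) = (\<Union>a\<in>{2, 3}. prepend a ` av123_132 2)"
    by (simp only:)
  then show ?thesis by (auto simp: av123_132_2 prepend_def bump_def)
qed

lemma av123_132_hd_le:
  assumes "\<tau> \<in> av123_132 n" "1 \<le> n"
  shows "\<tau> \<noteq> []" "hd \<tau> \<le> n"
proof -
  have "set \<tau> = {1..n}" using assms(1) by (simp add: av123_132_def perms_def)
  then show "\<tau> \<noteq> []" using assms(2) by auto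
  with \<open>set \<tau> = {1..n}\<close> show "hd \<tau> \<le> n" by (metis atLeastAtMost_iff hd_in_set)
qed

lemma sum_av123_132_Suc:
  assumes "1 \<le> n"
  shows "(\<Sum>\<pi>\<in>av123_132 (Suc n). h \<pi>) =
    (\<Sum>\<tau>\<in>av123_132 n. h (prepend (Suc n) \<tau>)) + (\<Sum>\<tau>\<in>av123_132 n. h (prepend n \<tau>))"
proof -
  have "av123_132 (Suc n) = prepend (Suc n) ` av123_132 n \<union> prepend n ` av123_132 n"
    using assms by (simp add: av123_132_Suc max_def atLeastAtMostSuc_conv Un_commute)
  moreover have "prepend (Suc n) ` av123_132 n \<inter> prepend n ` av123_132 n = {}"
    by (auto simp: prepend_def)
  ultimately show ?thesis
    by (simp add: sum.union_disjoint finite_av123_132 sum.reindex inj_prepend[THEN inj_on_subset])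
qed

section \<open>Ascents, descents and non-adjacent sets\<close>

lemma asc_set_Cons:
  assumes "xs \<noteq> []"
  shows "asc_set (a # xs) = (if a < hd xs then {0} else {}) \<union> Suc ` asc_set xs"
proof (intro equalityI subsetI)
  fix i assume "i \<in> asc_set (a # xs)"
  then show "i \<in> (if a < hd xs then {0} else {}) \<union> Suc ` asc_set xs"
    using assms by (cases i) (auto simp: asc_set_def hd_conv_nth)
qed (use assms in \<open>auto simp: asc_set_def hd_conv_nth split: if_splits\<close>)

lemma des_set_Cons:
  assumes "xs \<noteq> []"
  shows "des_set (a # xs) = (if hd xs < a then {0} else {}) \<union> Suc ` des_set xs"
proof (intro equalityI subsetI)
  fix i assume "i \<in> des_set (a # xs)"
  then show "i \<in> (if hd xs < a then {0} else {}) \<union> Suc ` des_set xs"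
    using assms by (cases i) (auto simp: des_set_def hd_conv_nth)
qed (use assms in \<open>auto simp: des_set_def hd_conv_nth split: if_splits\<close>)

lemma finite_asc_set: "finite (asc_set xs)"
  by (rule finite_subset[of _ "{..<length xs}"]) (auto simp: asc_set_def)

lemma finite_des_set: "finite (des_set xs)"
  by (rule finite_subset[of _ "{..<length xs}"]) (auto simp: des_set_def)

lemma asc_Nil [simp]: "asc [] = 0" and asc_singleton [simp]: "asc [x] = 0"
  by (simp_all add: asc_def asc_set_def)

lemma des_Nil [simp]: "des [] = 0" and des_singleton [simp]: "des [x] = 0"
  by (simp_all add: des_def des_set_def)

lemma asc_Cons:
  assumes "xs \<noteq> []"
  shows "asc (a # xs) = (if a < hd xs then 1 else 0) + asc xs"
  using assms finite_asc_set[of xs] by (simp add: asc_def asc_set_Cons card_image)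

lemma des_Cons:
  assumes "xs \<noteq> []"
  shows "des (a # xs) = (if hd xs < a then 1 else 0) + des xs"
  using assms finite_des_set[of xs] by (simp add: des_def des_set_Cons card_image)

lemma asc_set_map:
  assumes "strict_mono_on (set xs) f"
  shows "asc_set (map f xs) = asc_set xs"
  using assms unfolding asc_set_def by (auto simp: strict_mono_on_less)

lemma des_set_map:
  assumes "strict_mono_on (set xs) f"
  shows "des_set (map f xs) = des_set xs"
  using assms unfolding des_set_def by (auto simp: strict_mono_on_less)

lemma asc_map:
  assumes "strict_mono_on (set xs) f"
  shows "asc (map f xs) = asc xs"
  using assms by (simp add: asc_def asc_set_map)

lemma des_map:
  assumes "strict_mono_on (set xs) f"
  shows "des (map f xs) = des xs"
  using assms by (simp add: des_def des_set_map)

lemma asc_prepend: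
  assumes "\<pi> \<noteq> []"
  shows "asc (prepend a \<pi>) = (if a \<le> hd \<pi> then 1 else 0) + asc \<pi>"
  using assms
  by (simp add: prepend_def asc_Cons hd_map less_bump_iff asc_map strict_mono_on_bump)

lemma des_prepend:
  assumes "\<pi> \<noteq> []"
  shows "des (prepend a \<pi>) = (if hd \<pi> < a then 1 else 0) + des \<pi>"
  using assms
  by (simp add: prepend_def des_Cons hd_map bump_less_iff des_map strict_mono_on_bump)

definition max_nonadj_card :: "nat set \<Rightarrow> nat" where
  "max_nonadj_card S = Max {card I | I. I \<subseteq> S \<and> nonadj I}"

lemma MNA_eq_max_nonadj_card: "MNA xs = max_nonadj_card (asc_set xs)"
  by (simp add: MNA_def max_nonadj_card_def)

lemma MND_eq_max_nonadj_card: "MND xs = max_nonadj_card (des_set xs)"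
  by (simp add: MND_def max_nonadj_card_def)

lemma nonadj_empty: "nonadj {}"
  by (simp add: nonadj_def)

lemma finite_nonadj_cards:
  assumes "finite S"
  shows "finite {card I | I. I \<subseteq> S \<and> nonadj I}"
proof (rule finite_subset)
  show "{card I | I. I \<subseteq> S \<and> nonadj I} \<subseteq> card ` Pow S" by auto
qed (use assms in simp)

lemma card_le_max_nonadj_card:
  assumes "finite S" "I \<subseteq> S" "nonadj I"
  shows "card I \<le> max_nonadj_card S"
  unfolding max_nonadj_card_def using assms by (auto intro!: Max_ge finite_nonadj_cards)

lemma max_nonadj_card_obtains:
  assumes "finite S"
  obtains I where "I \<subseteq> S" "nonadj I" "card I = max_nonadj_card S"
proof -
  have "max_nonadj_card S \<in> {card I | I. I \<subseteq> S \<and> nonadj I}"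
    unfolding max_nonadj_card_def using assms nonadj_empty
    by (intro Max_in finite_nonadj_cards) auto
  then show ?thesis using that by force
qed

lemma max_nonadj_card_eq_card:
  assumes "finite S" "nonadj S"
  shows "max_nonadj_card S = card S"
proof (rule antisym)
  obtain I where I: "I \<subseteq> S" "card I = max_nonadj_card S"
    using max_nonadj_card_obtains[OF assms(1)] by blast
  then show "max_nonadj_card S \<le> card S"
    using card_mono[OF assms(1) I(1)] by simp
qed (rule card_le_max_nonadj_card[OF assms(1) order_refl assms(2)])

lemma nonadj_Suc_image_iff: "nonadj (Suc ` I) \<longleftrightarrow> nonadj I"
  unfolding nonadj_def by auto

lemma max_nonadj_card_Suc_image: "max_nonadj_card (Suc ` S) = max_nonadj_card S"
proof -
  have "{card I | I. I \<subseteq> Suc ` S \<and> nonadj I} =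
      {card (Suc ` J) | J. J \<subseteq> S \<and> nonadj (Suc ` J)}"
    by (auto simp: subset_image_iff)
  also have "\<dots> = {card J | J. J \<subseteq> S \<and> nonadj J}"
    by (simp add: nonadj_Suc_image_iff card_image)
  finally show ?thesis by (simp add: max_nonadj_card_def)
qed

lemma max_nonadj_card_of_0_notin:
  assumes "0 \<notin> S"
  shows "max_nonadj_card S = max_nonadj_card (Suc -` S)"
proof -
  have "S = Suc ` (Suc -` S)"
    using assms by (auto simp: image_iff) (metis not0_implies_Suc)
  then show ?thesis by (metis max_nonadj_card_Suc_image)
qed

lemma nonadj_card_le_Suc_card_vimage:
  assumes "finite I" "nonadj I"
  shows "card I \<le> Suc (card ((\<lambda>i. Suc (Suc i)) -` I))"
proof -
  let ?g = "\<lambda>i. Suc (Suc i)"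
  have "I \<subseteq> (I \<inter> {0, 1}) \<union> ?g ` (?g -` I)"
  proof
    fix x assume "x \<in> I"
    then show "x \<in> (I \<inter> {0, 1}) \<union> ?g ` (?g -` I)"
      by (cases x; cases "x - 1") (auto simp: image_iff)
  qed
  then have "card I \<le> card ((I \<inter> {0, 1}) \<union> ?g ` (?g -` I))"
    using assms(1) by (intro card_mono) (auto simp: finite_vimageI inj_def)
  also have "\<dots> \<le> card (I \<inter> {0, 1}) + card (?g ` (?g -` I))"
    by (rule card_Un_le)
  also have "card (?g ` (?g -` I)) = card (?g -` I)"
    by (rule card_image) (simp add: inj_on_def)
  finally have "card I \<le> card (I \<inter> {0, 1}) + card (?g -` I)" .
  moreover have "card (I \<inter> {0, 1}) \<le> 1"
    using assms(2) unfolding nonadj_def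
    by (cases "0 \<in> I"; cases "1 \<in> I") (auto simp: Int_insert_right)
  ultimately show ?thesis by simp
qed

lemma max_nonadj_card_of_0_in:
  assumes "finite S" "0 \<in> S"
  shows "max_nonadj_card S = Suc (max_nonadj_card ((\<lambda>i. Suc (Suc i)) -` S))"
    (is "_ = Suc (max_nonadj_card ?T)")
proof (rule antisym)
  let ?g = "\<lambda>i. Suc (Suc i)"
  have T: "finite ?T" using assms(1) by (simp add: finite_vimageI inj_def)
  obtain I where I: "I \<subseteq> S" "nonadj I" "card I = max_nonadj_card S"
    using max_nonadj_card_obtains[OF assms(1)] .
  have "card (?g -` I) \<le> max_nonadj_card ?T"
    using I by (intro card_le_max_nonadj_card[OF T]) (auto simp: nonadj_def)
  with nonadj_card_le_Suc_card_vimage[OF finite_subset[OF I(1) assms(1)] I(2)]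
  show "max_nonadj_card S \<le> Suc (max_nonadj_card ?T)"
    using I(3) by linarith
next
  let ?g = "\<lambda>i. Suc (Suc i)"
  have T: "finite ?T" using assms(1) by (simp add: finite_vimageI inj_def)
  obtain J where J: "J \<subseteq> ?T" "nonadj J" "card J = max_nonadj_card ?T"
    using max_nonadj_card_obtains[OF T] .
  have "card (?g ` J) = card J"
    by (rule card_image) (simp add: inj_on_def)
  then have "card (insert 0 (?g ` J)) = Suc (card J)"
    using finite_subset[OF J(1) T] by (auto simp: card_insert_if)
  moreover have "nonadj (insert 0 (?g ` J))"
    using J(2) unfolding nonadj_def by auto
  ultimately show "Suc (max_nonadj_card ?T) \<le> max_nonadj_card S"
    using J assms card_le_max_nonadj_card[of S "insert 0 (?g ` J)"] by auto
qed

lemma MND_Nil [simp]: "MND [] = 0" and MND_singleton [simp]: "MND [x] = 0"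
  by (simp_all add: MND_eq_max_nonadj_card des_set_def max_nonadj_card_eq_card nonadj_empty)

lemma MND_map:
  assumes "strict_mono_on (set xs) f"
  shows "MND (map f xs) = MND xs"
  using assms by (simp add: MND_eq_max_nonadj_card des_set_map)

lemma MND_Cons:
  assumes "xs \<noteq> []"
  shows "MND (a # xs) = (if hd xs < a then Suc (MND (tl xs)) else MND xs)"
proof (cases "hd xs < a")
  case True
  then have "0 \<in> des_set (a # xs)" using assms by (simp add: des_set_Cons)
  moreover have "(\<lambda>i. Suc (Suc i)) -` des_set (a # xs) = des_set (tl xs)"
    using assms by (cases xs) (auto simp: des_set_def)
  ultimately show ?thesis
    using True by (simp add: MND_eq_max_nonadj_card max_nonadj_card_of_0_in finite_des_set)
next
  case False
  then have "0 \<notin> des_set (a # xs)" using assms by (simp add: des_set_Cons)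
  moreover have "Suc -` des_set (a # xs) = des_set xs"
    by (auto simp: des_set_def)
  ultimately show ?thesis
    using False by (simp add: MND_eq_max_nonadj_card max_nonadj_card_of_0_notin)
qed

lemma MND_prepend:
  assumes "\<pi> \<noteq> []"
  shows "MND (prepend a \<pi>) = (if hd \<pi> < a then Suc (MND (tl \<pi>)) else MND \<pi>)"
  using assms
  by (simp add: prepend_def MND_Cons hd_map bump_less_iff map_tl[symmetric] MND_map
      strict_mono_on_bump)

lemma nonadj_asc_set:
  assumes "\<not> contains123 xs"
  shows "nonadj (asc_set xs)"
proof -
  have no_consecutive: "Suc i \<notin> asc_set xs" if "i \<in> asc_set xs" for i
  proof
    assume "Suc i \<in> asc_set xs"
    with that have "contains123 xs"
      unfolding contains123_def asc_set_def
      by (intro exI[of _ i] exI[of _ "Suc i"] exI[of _ "Suc (Suc i)"]) auto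
    with assms show False ..
  qed
  show ?thesis
    unfolding nonadj_def
  proof (intro ballI impI)
    fix i j assume "i \<in> asc_set xs" "j \<in> asc_set xs" "i \<noteq> j"
    then have "Suc i \<noteq> j" "Suc j \<noteq> i" using no_consecutive by blast+
    with \<open>i \<noteq> j\<close> show "i + 2 \<le> j \<or> j + 2 \<le> i" by arith
  qed
qed

lemma MNA_eq_asc:
  assumes "\<not> contains123 xs"
  shows "MNA xs = asc xs"
  using assms
  by (simp add: MNA_eq_max_nonadj_card asc_def max_nonadj_card_eq_card finite_asc_set
      nonadj_asc_set)

section \<open>Generating functions\<close>

unbundle fps_syntax

lemma fps_eq_divide_of_recurrence:
  fixes f :: "'a::field fps"
  assumes rec: "\<And>n. f $ (n + 4) + a * f $ (n + 3) + b * f $ (n + 2) + c * f $ (n + 1) = 0"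
    and init: "f $ 0 = n0" "f $ 1 + a * f $ 0 = n1" "f $ 2 + a * f $ 1 + b * f $ 0 = n2"
      "f $ 3 + a * f $ 2 + b * f $ 1 + c * f $ 0 = n3"
  shows "f = (fps_const n0 + fps_const n1 * fps_X + fps_const n2 * fps_X ^ 2
      + fps_const n3 * fps_X ^ 3)
    / (1 + fps_const a * fps_X + fps_const b * fps_X ^ 2 + fps_const c * fps_X ^ 3)"
    (is "f = ?N / ?D")
proof -
  have "f * ?D = f + fps_const a * (f * fps_X ^ 1) + fps_const b * (f * fps_X ^ 2)
      + fps_const c * (f * fps_X ^ 3)"
    by (simp add: algebra_simps)
  then have coeff: "(f * ?D) $ n = f $ n + (if n < 1 then 0 else a * f $ (n - 1))
      + (if n < 2 then 0 else b * f $ (n - 2)) + (if n < 3 then 0 else c * f $ (n - 3))"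
    for n :: nat
    by (simp only: fps_add_nth fps_mult_left_const_nth fps_X_power_mult_right_nth) simp
  have "f * ?D = ?N"
  proof (rule fps_ext)
    fix n :: nat
    consider "n = 0" | "n = 1" | "n = 2" | "n = 3" | m where "n = m + 4"
    proof -
      have "n = 0 \<or> n = 1 \<or> n = 2 \<or> n = 3 \<or> n = (n - 4) + 4" by arith
      then show thesis using that by blast
    qed
    then show "(f * ?D) $ n = ?N $ n"
    proof cases
      case (5 m)
      show ?thesis unfolding 5 coeff using rec[of m] by (simp add: add.commute)
    qed (simp_all add: coeff flip: init)
  qed
  moreover have D: "?D \<noteq> 0"
  proof
    assume "?D = 0"
    then have "?D $ 0 = 0" by simp
    then show False by simp
  qed
  ultimately have "?N / ?D = f * ?D / ?D" by simp
  also have "\<dots> = f" by (rule nonzero_mult_div_cancel_right[OF D])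
  finally show ?thesis ..
qed

lemma gf_nth: "gf st t $ n = (\<Sum>\<pi>\<in>av123_132 n. t ^ st \<pi>)"
  by (simp add: gf_def)

lemma gf_initial_coeffs:
  "gf st t $ 0 = t ^ st []"
  "gf st t $ Suc 0 = t ^ st [1]"
  "gf st t $ 2 = t ^ st [1, 2] + t ^ st [2, 1]"
  "gf st t $ 3 = t ^ st [2, 1, 3] + t ^ st [2, 3, 1] + t ^ st [3, 1, 2] + t ^ st [3, 2, 1]"
  using av123_132_1 by (simp_all add: gf_nth av123_132_0 av123_132_2 av123_132_3)

definition prepend_sum :: "(nat list \<Rightarrow> nat) \<Rightarrow> 'a::field \<Rightarrow> nat \<Rightarrow> nat \<Rightarrow> 'a" where
  "prepend_sum st t a n = (\<Sum>\<tau>\<in>av123_132 n. t ^ st (prepend a \<tau>))"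

lemma gf_nth_Suc:
  assumes "1 \<le> n"
  shows "gf st t $ Suc n = prepend_sum st t (Suc n) n + prepend_sum st t n n"
  using sum_av123_132_Suc[OF assms] by (simp add: gf_nth prepend_sum_def)

lemma prepend_sum_Suc:
  assumes "1 \<le> n"
  shows "prepend_sum st t a (Suc n) =
    (\<Sum>\<tau>\<in>av123_132 n. t ^ st (prepend a (prepend (Suc n) \<tau>))) +
    (\<Sum>\<tau>\<in>av123_132 n. t ^ st (prepend a (prepend n \<tau>)))"
  unfolding prepend_sum_def by (rule sum_av123_132_Suc[OF assms])

lemma asc_prepend_Suc:
  assumes "\<tau> \<in> av123_132 n" "1 \<le> n"
  shows "asc (prepend (Suc n) \<tau>) = asc \<tau>"
  using av123_132_hd_le[OF assms] by (simp add: asc_prepend)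

lemma prepend_sum_max_asc:
  assumes "1 \<le> n"
  shows "prepend_sum asc t (Suc n) n = gf asc t $ n"
  unfolding prepend_sum_def gf_nth using asc_prepend_Suc[OF _ assms] by simp

lemma prepend_sum_second_asc:
  assumes "1 \<le> n"
  shows "prepend_sum asc t (Suc n) (Suc n) = t * gf asc t $ n + prepend_sum asc t n n"
proof -
  have "asc (prepend (Suc n) (prepend (Suc n) \<tau>)) = Suc (asc \<tau>)" if "\<tau> \<in> av123_132 n" for \<tau>
    using that assms by (simp add: asc_prepend asc_prepend_Suc)
  moreover have "asc (prepend (Suc n) (prepend n \<tau>)) = asc (prepend n \<tau>)" for \<tau>
    by (simp add: asc_prepend)
  ultimately show ?thesis
    unfolding prepend_sum_Suc[OF assms] by (simp add: prepend_sum_def gf_nth sum_distrib_left)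
qed

lemma gf_asc_rec:
  assumes "1 \<le> n"
  shows "gf asc t $ (n + 2) = 2 * gf asc t $ (n + 1) + (t - 1) * gf asc t $ n"
proof -
  have "gf asc t $ (n + 2) = gf asc t $ (n + 1) + prepend_sum asc t (Suc n) (Suc n)"
    using gf_nth_Suc[of "Suc n" asc t] prepend_sum_max_asc[of "Suc n" t] by simp
  also have "prepend_sum asc t (Suc n) (Suc n) = t * gf asc t $ n + prepend_sum asc t n n"
    by (rule prepend_sum_second_asc[OF assms])
  also have "prepend_sum asc t n n = gf asc t $ (n + 1) - gf asc t $ n"
    using gf_nth_Suc[OF assms, of asc t] prepend_sum_max_asc[OF assms, of t] by simp
  finally show ?thesis by (simp add: algebra_simps)
qed

lemma gf_asc: "gf asc t = (1 - fps_X) / (1 - 2 * fps_X + fps_X ^ 2 - fps_const t * fps_X ^ 2)"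
proof -
  have num: "1 - fps_X = fps_const 1 + fps_const (- 1) * fps_X + fps_const 0 * fps_X ^ 2
      + fps_const (0 :: 'a) * fps_X ^ 3"
    by (rule fps_ext) simp
  have den: "1 - 2 * fps_X + fps_X ^ 2 - fps_const t * fps_X ^ 2
      = 1 + fps_const (- 2) * fps_X + fps_const (1 - t) * fps_X ^ 2 + fps_const 0 * fps_X ^ 3"
    by (rule fps_ext) (simp add: fps_numeral_fps_const)
  show ?thesis
    unfolding num den
  proof (rule fps_eq_divide_of_recurrence)
    show "gf asc t $ (n + 4) + (- 2) * gf asc t $ (n + 3) + (1 - t) * gf asc t $ (n + 2)
        + 0 * gf asc t $ (n + 1) = 0" for n
      using gf_asc_rec[of "n + 2" t] by (simp add: algebra_simps numeral_eq_Suc)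
  qed (simp_all add: gf_initial_coeffs asc_Cons algebra_simps)
qed

lemma des_prepend_Suc:
  assumes "\<tau> \<in> av123_132 n" "1 \<le> n"
  shows "des (prepend (Suc n) \<tau>) = Suc (des \<tau>)"
  using av123_132_hd_le[OF assms] by (simp add: des_prepend)

lemma prepend_sum_max_des:
  assumes "1 \<le> n"
  shows "prepend_sum des t (Suc n) n = t * gf des t $ n"
  unfolding prepend_sum_def gf_nth using des_prepend_Suc[OF _ assms]
  by (simp add: sum_distrib_left)

lemma prepend_sum_second_des:
  assumes "1 \<le> n"
  shows "prepend_sum des t (Suc n) (Suc n) = t * gf des t $ n + t * prepend_sum des t n n"
proof -
  have "des (prepend (Suc n) (prepend (Suc n) \<tau>)) = Suc (des \<tau>)" if "\<tau> \<in> av123_132 n" for \<tau>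
    using that assms by (simp add: des_prepend des_prepend_Suc)
  moreover have "des (prepend (Suc n) (prepend n \<tau>)) = Suc (des (prepend n \<tau>))" for \<tau>
    by (simp add: des_prepend)
  ultimately show ?thesis
    unfolding prepend_sum_Suc[OF assms] by (simp add: prepend_sum_def gf_nth sum_distrib_left)
qed

lemma gf_des_rec:
  assumes "1 \<le> n"
  shows "gf des t $ (n + 2) = 2 * t * gf des t $ (n + 1) + (t - t ^ 2) * gf des t $ n"
proof -
  have "gf des t $ (n + 2) = t * gf des t $ (n + 1) + prepend_sum des t (Suc n) (Suc n)"
    using gf_nth_Suc[of "Suc n" des t] prepend_sum_max_des[of "Suc n" t] by simp
  also have "prepend_sum des t (Suc n) (Suc n) = t * gf des t $ n + t * prepend_sum des t n n"
    by (rule prepend_sum_second_des[OF assms])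
  also have "prepend_sum des t n n = gf des t $ (n + 1) - t * gf des t $ n"
    using gf_nth_Suc[OF assms, of des t] prepend_sum_max_des[OF assms, of t] by simp
  finally show ?thesis by (simp add: algebra_simps power2_eq_square)
qed

lemma gf_des:
  "gf des t = (1 + fps_X - 2 * fps_const t * fps_X + fps_X ^ 2 - 2 * fps_const t * fps_X ^ 2
      + fps_const t ^ 2 * fps_X ^ 2)
    / (1 - 2 * fps_const t * fps_X - fps_const t * fps_X ^ 2 + fps_const t ^ 2 * fps_X ^ 2)"
proof -
  have num: "1 + fps_X - 2 * fps_const t * fps_X + fps_X ^ 2 - 2 * fps_const t * fps_X ^ 2
      + fps_const t ^ 2 * fps_X ^ 2 = fps_const 1 + fps_const (1 - 2 * t) * fps_X
      + fps_const (1 - 2 * t + t ^ 2) * fps_X ^ 2 + fps_const 0 * fps_X ^ 3"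
    by (rule fps_ext) (simp add: fps_numeral_fps_const fps_const_power)
  have den: "1 - 2 * fps_const t * fps_X - fps_const t * fps_X ^ 2 + fps_const t ^ 2 * fps_X ^ 2
      = 1 + fps_const (- 2 * t) * fps_X + fps_const (t ^ 2 - t) * fps_X ^ 2
        + fps_const 0 * fps_X ^ 3"
    by (rule fps_ext) (simp add: fps_numeral_fps_const fps_const_power)
  show ?thesis
    unfolding num den
  proof (rule fps_eq_divide_of_recurrence)
    show "gf des t $ (n + 4) + (- 2 * t) * gf des t $ (n + 3) + (t ^ 2 - t) * gf des t $ (n + 2)
        + 0 * gf des t $ (n + 1) = 0" for n
      using gf_des_rec[of "n + 2" t] by (simp add: algebra_simps numeral_eq_Suc)
  qed (simp_all add: gf_initial_coeffs des_Cons algebra_simps power2_eq_square)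
qed

lemma prepend_sum_max_MND_Suc:
  assumes "1 \<le> n"
  shows "prepend_sum MND t (Suc (Suc n)) (Suc n) = 2 * t * gf MND t $ n"
proof -
  have "MND (prepend (Suc (Suc n)) (prepend a \<tau>)) = Suc (MND \<tau>)" if "a \<le> Suc n" for a \<tau>
    using that by (simp add: MND_prepend MND_map strict_mono_on_bump)
  then show ?thesis
    unfolding prepend_sum_Suc[OF assms]
    by (simp add: prepend_sum_def gf_nth sum_distrib_left mult.assoc)
qed

lemma prepend_sum_second_MND:
  assumes "1 \<le> n"
  shows "prepend_sum MND t (Suc n) (Suc n) = prepend_sum MND t (Suc n) n + t * gf MND t $ n"
proof -
  have "MND (prepend (Suc n) (prepend (Suc n) \<tau>)) = MND (prepend (Suc n) \<tau>)" for \<tau>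
    by (simp add: MND_prepend)
  moreover have "MND (prepend (Suc n) (prepend n \<tau>)) = Suc (MND \<tau>)" for \<tau>
    by (simp add: MND_prepend MND_map strict_mono_on_bump)
  ultimately show ?thesis
    unfolding prepend_sum_Suc[OF assms] by (simp add: prepend_sum_def gf_nth sum_distrib_left)
qed

lemma gf_MND_rec:
  assumes "1 \<le> n"
  shows "gf MND t $ (n + 3) = 3 * t * gf MND t $ (n + 1) + 2 * t * gf MND t $ n"
proof -
  have "gf MND t $ (n + 3) = prepend_sum MND t (Suc (Suc (Suc n))) (Suc (Suc n))
      + prepend_sum MND t (Suc (Suc n)) (Suc (Suc n))"
    using gf_nth_Suc[of "Suc (Suc n)" MND t] by (simp add: numeral_eq_Suc)
  also have "prepend_sum MND t (Suc (Suc (Suc n))) (Suc (Suc n)) = 2 * t * gf MND t $ (n + 1)"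
    using prepend_sum_max_MND_Suc[of "Suc n" t] by simp
  also have "prepend_sum MND t (Suc (Suc n)) (Suc (Suc n))
      = prepend_sum MND t (Suc (Suc n)) (Suc n) + t * gf MND t $ (n + 1)"
    using prepend_sum_second_MND[of "Suc n" t] by simp
  also have "prepend_sum MND t (Suc (Suc n)) (Suc n) = 2 * t * gf MND t $ n"
    by (rule prepend_sum_max_MND_Suc[OF assms])
  finally show ?thesis by (simp add: algebra_simps)
qed

lemma gf_MND:
  "gf MND t = (1 + fps_X + fps_X ^ 2 - 2 * fps_X ^ 2 * fps_const t - fps_X ^ 3 * fps_const t)
    / (1 - 3 * fps_X ^ 2 * fps_const t - 2 * fps_X ^ 3 * fps_const t)"
proof -
  have num: "1 + fps_X + fps_X ^ 2 - 2 * fps_X ^ 2 * fps_const t - fps_X ^ 3 * fps_const t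
      = fps_const 1 + fps_const 1 * fps_X + fps_const (1 - 2 * t) * fps_X ^ 2
        + fps_const (- t) * fps_X ^ 3"
    by (rule fps_ext) (simp add: fps_numeral_fps_const)
  have den: "1 - 3 * fps_X ^ 2 * fps_const t - 2 * fps_X ^ 3 * fps_const t
      = 1 + fps_const 0 * fps_X + fps_const (- 3 * t) * fps_X ^ 2 + fps_const (- 2 * t) * fps_X ^ 3"
    by (rule fps_ext) (simp add: fps_numeral_fps_const)
  show ?thesis
    unfolding num den
  proof (rule fps_eq_divide_of_recurrence)
    show "gf MND t $ (n + 4) + 0 * gf MND t $ (n + 3) + (- 3 * t) * gf MND t $ (n + 2)
        + (- 2 * t) * gf MND t $ (n + 1) = 0" for n
      using gf_MND_rec[of "n + 1" t] by (simp add: algebra_simps numeral_eq_Suc)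
  qed (simp_all add: gf_initial_coeffs MND_Cons algebra_simps)
qed

lemma gf_MNA_eq_gf_asc: "gf MNA t = gf asc t"
  unfolding gf_def using MNA_eq_asc by (simp add: av123_132_def)

theorem corollary1:
  fixes p q y z :: real
  shows "gf asc p = (1 - fps_X) / (1 - 2 * fps_X + fps_X^2 - fps_const p * fps_X^2)
   \<and> gf des q = (1 + fps_X - 2 * fps_const q * fps_X + fps_X^2 - 2 * fps_const q * fps_X^2
                   + fps_const q ^ 2 * fps_X^2)
                 / (1 - 2 * fps_const q * fps_X - fps_const q * fps_X^2 + fps_const q ^ 2 * fps_X^2)
   \<and> gf MNA y = (1 - fps_X) / (1 - 2 * fps_X + fps_X^2 - fps_X^2 * fps_const y)
   \<and> gf MND z = (1 + fps_X + fps_X^2 - 2 * fps_X^2 * fps_const z - fps_X^3 * fps_const z)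
                 / (1 - 3 * fps_X^2 * fps_const z - 2 * fps_X^3 * fps_const z)"
proof (intro conjI)
  show "gf MNA y = (1 - fps_X) / (1 - 2 * fps_X + fps_X^2 - fps_X^2 * fps_const y)"
    unfolding gf_MNA_eq_gf_asc gf_asc by (simp only: mult.commute)
qed (rule gf_asc gf_des gf_MND)+

end
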